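(* Let $n\ge 3$. Let $c_{n,6}=-\min_{x\in[-1,1]}Q_{n,6}(x)$ and $b_{n,6}=1+Q_{n,6}(1)/c_{n,6}$. Then there is no finite subset $Y\subseteq\mathbb{S}^{n-1}$ which is a spherical design of harmonic index $6$ and has $|Y|=b_{n,6}$ (i.e. there is no tight spherical design of harmonic index $6$ on $\mathbb{S}^{n-1}$).
   Context: $\mathbb{S}^{n-1}$ is the unit sphere in $\mathbb{R}^n$. A finite $Y\subseteq\mathbb{S}^{n-1}$ is a spherical design of harmonic index $t$ if $\sum_{\mathbf{x}\in Y}f(\mathbf{x})=0$ for every real homogeneous harmonic polynomial $f$ in $n$ variables of degree exactly $t$. Every such $Y$ satisfies $|Y|\ge b_{n,t}:=1+Q_{n,t}(1)/c_{n,t}$ with $c_{n,t}=-\min_{[-1,1]}Q_{n,t}$; $Y$ is called tight if equality holds. Here $Q_{n,6}(x)=\frac{n(n+2)(n+10)}{6!}\{(n+4)(n+6)(n+8)x^6-15(n+4)(n+6)x^4+45(n+4)x^2-15\}$ is the Gegenbauer polynomial of degree 6, normalized so that $Q_{n,6}(1)$ equals the dimension of the space of homogeneous harmonic polynomials of degree 6 in $n$ variables. *)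

theory Defs
  imports Complex_Main
begin

text \<open>Points of R^n are represented as functions nat => real vanishing outside {..<n}.\<close>

definition sphere_pts :: "nat \<Rightarrow> (nat \<Rightarrow> real) set" where
  "sphere_pts n = {x. (\<forall>i\<ge>n. x i = 0) \<and> (\<Sum>i<n. (x i)^2) = 1}"

definition exps_of_degree :: "nat \<Rightarrow> nat \<Rightarrow> (nat \<Rightarrow> nat) set" where
  "exps_of_degree n t = {\<alpha>. (\<forall>i\<ge>n. \<alpha> i = 0) \<and> (\<Sum>i<n. \<alpha> i) = t}"

text \<open>A homogeneous polynomial of degree t in n variables is given by its coefficient
  function c on exps_of_degree n t; its evaluation at a point x:\<close>
definition hpoly_eval :: "nat \<Rightarrow> nat \<Rightarrow> ((nat \<Rightarrow> nat) \<Rightarrow> real) \<Rightarrow> (nat \<Rightarrow> real) \<Rightarrow> real" where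
  "hpoly_eval n t c x = (\<Sum>\<alpha>\<in>exps_of_degree n t. c \<alpha> * (\<Prod>i<n. x i ^ \<alpha> i))"

text \<open>Harmonic: the Laplacian vanishes, i.e. every coefficient of the Laplacian
  (a homogeneous polynomial of degree t-2) is zero. For t < 2 the Laplacian is 0.\<close>
definition harmonic_hpoly :: "nat \<Rightarrow> nat \<Rightarrow> ((nat \<Rightarrow> nat) \<Rightarrow> real) \<Rightarrow> bool" where
  "harmonic_hpoly n t c \<longleftrightarrow> (2 \<le> t \<longrightarrow>
     (\<forall>\<beta>\<in>exps_of_degree n (t - 2).
        (\<Sum>i<n. real ((\<beta> i + 2) * (\<beta> i + 1)) * c (\<beta>(i := \<beta> i + 2))) = 0))"

definition design_harmonic_index :: "nat \<Rightarrow> nat \<Rightarrow> (nat \<Rightarrow> real) set \<Rightarrow> bool" where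
  "design_harmonic_index n t Y \<longleftrightarrow> finite Y \<and> Y \<subseteq> sphere_pts n \<and>
     (\<forall>c. harmonic_hpoly n t c \<longrightarrow> (\<Sum>x\<in>Y. hpoly_eval n t c x) = 0)"

definition Q6 :: "nat \<Rightarrow> real \<Rightarrow> real" where
  "Q6 n x = real n * (real n + 2) * (real n + 10) / fact 6 *
     ((real n + 4) * (real n + 6) * (real n + 8) * x^6
      - 15 * (real n + 4) * (real n + 6) * x^4 + 45 * (real n + 4) * x^2 - 15)"

definition c6 :: "nat \<Rightarrow> real" where
  "c6 n = - Inf (Q6 n ` {-1..1})"

definition b6 :: "nat \<Rightarrow> real" where
  "b6 n = 1 + Q6 n 1 / c6 n"

end

theory Submission
  imports Defs "HOL-Analysis.Analysis" "HOL-Library.Function_Algebras" "HOL-Library.Z2"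
begin

text \<open>
  For a unit vector \<open>y\<close>, homogenising \<open>Q\<^sub>6(\<langle>x,y\<rangle>)\<close> to degree 6 with powers of \<open>|x|\<^sup>2\<close> gives
  a harmonic polynomial, the zonal harmonic with pole \<open>y\<close>. Summing it over a design \<open>Y\<close> of harmonic
  index 6 yields \<open>\<Sum>\<^sub>x\<^sub>,\<^sub>y Q\<^sub>6(\<langle>x,y\<rangle>) = 0\<close>. Up to a positive factor \<open>Q\<^sub>6(t) = g(t\<^sup>2)\<close> with \<open>g\<close> cubic;
  the diagonal contributes \<open>|Y| g(1)\<close> and every other term is at least \<open>min g = g(u)\<close>, so
  \<open>|Y| \<le> b\<^sub>n\<^sub>,\<^sub>6\<close>, with equality only if \<open>\<langle>x,y\<rangle>\<^sup>2 = u\<close> for all \<open>x \<noteq> y\<close>: a tight design is a set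
  of equiangular lines.

  For \<open>n \<ge> 89\<close> this contradicts Gerzon's bound \<open>|Y| \<le> n\<^sup>2\<close>, since there \<open>b\<^sub>n\<^sub>,\<^sub>6 > n\<^sup>2\<close>. For smaller
  \<open>n\<close>, integrality of \<open>b\<^sub>n\<^sub>,\<^sub>6\<close> makes \<open>u\<close>, hence \<open>sqrt (10(n+3)(n+6))\<close>, rational, which leaves only
  \<open>n = 24\<close> with \<open>u = 1/4\<close> and \<open>b\<^sub>2\<^sub>4\<^sub>,\<^sub>6 = 231\<close>; but a parity argument on the Gram matrix excludes
  even 26 unit vectors in \<open>\<real>\<^sup>2\<^sup>4\<close> with mutual inner products \<open>1/2\<close> or \<open>-1/2\<close>.
\<close>

section \<open>Polynomial calculus on coefficient functions\<close>

text \<open>Polynomials are handled through their coefficient functions on exponent vectors, as in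
  hpoly_eval; \<open>var_mult i\<close> and \<open>var_deriv i\<close> are multiplication by \<open>x\<^sub>i\<close> and \<open>\<partial>/\<partial>x\<^sub>i\<close>.\<close>

type_synonym coeffs = "(nat \<Rightarrow> nat) \<Rightarrow> real"

definition var_mult :: "nat \<Rightarrow> coeffs \<Rightarrow> coeffs" where
  "var_mult i c \<alpha> = (if 1 \<le> \<alpha> i then c (\<alpha>(i := \<alpha> i - 1)) else 0)"

definition var_deriv :: "nat \<Rightarrow> coeffs \<Rightarrow> coeffs" where
  "var_deriv i c \<beta> = real (\<beta> i + 1) * c (\<beta>(i := \<beta> i + 1))"

lemma var_deriv_var_mult:
  "var_deriv j (var_mult i c) = (\<lambda>\<beta>. var_mult i (var_deriv j c) \<beta> + (if i = j then c \<beta> else 0))"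
proof
  fix \<beta>
  show "var_deriv j (var_mult i c) \<beta> = var_mult i (var_deriv j c) \<beta> + (if i = j then c \<beta> else 0)"
    by (cases "i = j"; cases "\<beta> i") (auto simp: var_deriv_def var_mult_def algebra_simps fun_upd_twist fun_upd_idem)
qed

lemma var_mult_commute: "var_mult j (var_mult i c) = var_mult i (var_mult j c)"
  by (rule ext) (auto simp: var_mult_def fun_upd_twist)

lemma var_deriv_add: "var_deriv i (\<lambda>a. f a + g a) = (\<lambda>b. var_deriv i f b + var_deriv i g b)"
  by (auto simp: var_deriv_def algebra_simps)
lemma var_deriv_scale: "var_deriv i (\<lambda>a. r * f a) = (\<lambda>b. r * var_deriv i f b)"
  by (auto simp: var_deriv_def algebra_simps)
lemma var_deriv_sum: "var_deriv i (\<lambda>a. \<Sum>k\<in>K. f k a) = (\<lambda>b. \<Sum>k\<in>K. var_deriv i (f k) b)"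
  by (auto simp: var_deriv_def sum_distrib_left)
lemma var_mult_add: "var_mult i (\<lambda>a. f a + g a) = (\<lambda>b. var_mult i f b + var_mult i g b)"
  by (auto simp: var_mult_def)
lemma var_mult_scale: "var_mult i (\<lambda>a. r * f a) = (\<lambda>b. r * var_mult i f b)"
  by (auto simp: var_mult_def)
lemma var_mult_sum: "var_mult i (\<lambda>a. \<Sum>k\<in>K. f k a) = (\<lambda>b. \<Sum>k\<in>K. var_mult i (f k) b)"
  by (auto simp: var_mult_def)
lemma var_mult_zero: "var_mult i (\<lambda>a. 0) = (\<lambda>b. 0)"
  by (auto simp: var_mult_def)

lemmas var_linear_simps =
  var_deriv_add var_deriv_scale var_deriv_sum var_mult_add var_mult_scale var_mult_sum var_mult_zero

definition lin_mult :: "nat \<Rightarrow> (nat \<Rightarrow> real) \<Rightarrow> coeffs \<Rightarrow> coeffs" where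
  "lin_mult n y c = (\<lambda>a. \<Sum>i<n. y i * var_mult i c a)"

definition norm2_mult :: "nat \<Rightarrow> coeffs \<Rightarrow> coeffs" where
  "norm2_mult n c = (\<lambda>a. \<Sum>i<n. var_mult i (var_mult i c) a)"

definition laplacian :: "nat \<Rightarrow> coeffs \<Rightarrow> coeffs" where
  "laplacian n c = (\<lambda>a. \<Sum>i<n. var_deriv i (var_deriv i c) a)"

definition dir_deriv :: "nat \<Rightarrow> (nat \<Rightarrow> real) \<Rightarrow> coeffs \<Rightarrow> coeffs" where
  "dir_deriv n y c = (\<lambda>a. \<Sum>i<n. y i * var_deriv i c a)"

definition euler_op :: "nat \<Rightarrow> coeffs \<Rightarrow> coeffs" where
  "euler_op n c = (\<lambda>a. \<Sum>i<n. var_mult i (var_deriv i c) a)"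

definition one_coeffs :: coeffs where
  "one_coeffs = (\<lambda>a. if a = (\<lambda>_. 0) then 1 else 0)"

lemma lin_mult_add: "lin_mult n y (\<lambda>a. f a + g a) = (\<lambda>b. lin_mult n y f b + lin_mult n y g b)"
  by (simp add: lin_mult_def var_linear_simps algebra_simps sum.distrib)
lemma lin_mult_scale: "lin_mult n y (\<lambda>a. r * f a) = (\<lambda>b. r * lin_mult n y f b)"
  by (simp add: lin_mult_def var_linear_simps algebra_simps sum_distrib_left)
lemma lin_mult_sum: "lin_mult n y (\<lambda>a. \<Sum>k\<in>K. f k a) = (\<lambda>b. \<Sum>k\<in>K. lin_mult n y (f k) b)"
  by (simp add: lin_mult_def var_linear_simps sum_distrib_left sum.swap[of _ K] algebra_simps)
lemma norm2_mult_add: "norm2_mult n (\<lambda>a. f a + g a) = (\<lambda>b. norm2_mult n f b + norm2_mult n g b)"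
  by (simp add: norm2_mult_def var_linear_simps sum.distrib)
lemma norm2_mult_scale: "norm2_mult n (\<lambda>a. r * f a) = (\<lambda>b. r * norm2_mult n f b)"
  by (simp add: norm2_mult_def var_linear_simps sum_distrib_left)
lemma norm2_mult_sum: "norm2_mult n (\<lambda>a. \<Sum>k\<in>K. f k a) = (\<lambda>b. \<Sum>k\<in>K. norm2_mult n (f k) b)"
  by (simp add: norm2_mult_def var_linear_simps sum.swap[of _ K])
lemma norm2_mult_zero: "norm2_mult n (\<lambda>a. 0) = (\<lambda>b. 0)"
  by (simp add: norm2_mult_def var_mult_zero)
lemma laplacian_add: "laplacian n (\<lambda>a. f a + g a) = (\<lambda>b. laplacian n f b + laplacian n g b)"
  by (simp add: laplacian_def var_linear_simps sum.distrib)
lemma laplacian_scale: "laplacian n (\<lambda>a. r * f a) = (\<lambda>b. r * laplacian n f b)"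
  by (simp add: laplacian_def var_linear_simps sum_distrib_left)

lemma var_deriv_lin_mult:
  "var_deriv j (lin_mult n y c) = (\<lambda>b. lin_mult n y (var_deriv j c) b + (if j < n then y j * c b else 0))"
proof
  fix b
  have "\<And>i. y i * var_deriv j (var_mult i c) b = y i * var_mult i (var_deriv j c) b + (if i = j then y j * c b else 0)"
    by (simp add: var_deriv_var_mult distrib_left)
  then have "var_deriv j (lin_mult n y c) b
      = (\<Sum>i<n. y i * var_mult i (var_deriv j c) b + (if i = j then y j * c b else 0))"
    by (simp add: lin_mult_def var_linear_simps)
  then show "var_deriv j (lin_mult n y c) b = lin_mult n y (var_deriv j c) b + (if j < n then y j * c b else 0)"
    by (simp add: sum.distrib lin_mult_def)
qed

lemma var_deriv_norm2_mult:
  "var_deriv j (norm2_mult n c) = (\<lambda>b. norm2_mult n (var_deriv j c) b + (if j < n then 2 * var_mult j c b else 0))"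
proof
  fix b
  have "\<And>i. var_deriv j (var_mult i (var_mult i c)) b
      = var_mult i (var_mult i (var_deriv j c)) b + (if i = j then 2 * var_mult j c b else 0)"
    by (auto simp: var_deriv_var_mult var_linear_simps)
  then show "var_deriv j (norm2_mult n c) b = norm2_mult n (var_deriv j c) b + (if j < n then 2 * var_mult j c b else 0)"
    by (simp add: norm2_mult_def var_linear_simps sum.distrib)
qed

lemma var_mult_lin_mult: "var_mult j (lin_mult n y c) = lin_mult n y (var_mult j c)"
  by (simp add: lin_mult_def var_linear_simps var_mult_commute)

lemma var_mult_norm2_mult: "var_mult j (norm2_mult n c) = norm2_mult n (var_mult j c)"
  by (simp add: norm2_mult_def var_linear_simps var_mult_commute)

lemma laplacian_lin_mult:
  "laplacian n (lin_mult n y c) = (\<lambda>b. lin_mult n y (laplacian n c) b + 2 * dir_deriv n y c b)"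
proof
  fix b
  have "laplacian n (lin_mult n y c) b = (\<Sum>j<n. 2 * (y j * var_deriv j c b) + lin_mult n y (var_deriv j (var_deriv j c)) b)"
    unfolding laplacian_def by (simp add: var_deriv_lin_mult var_linear_simps lin_mult_add lin_mult_scale)
  then show "laplacian n (lin_mult n y c) b = lin_mult n y (laplacian n c) b + 2 * dir_deriv n y c b"
    by (simp add: sum.distrib laplacian_def dir_deriv_def lin_mult_sum sum_distrib_left)
qed

lemma laplacian_norm2_mult:
  "laplacian n (norm2_mult n c) = (\<lambda>b. norm2_mult n (laplacian n c) b + 4 * euler_op n c b + 2 * real n * c b)"
proof
  fix b
  have "\<And>j. j < n \<Longrightarrow> var_deriv j (var_deriv j (norm2_mult n c)) b
      = norm2_mult n (var_deriv j (var_deriv j c)) b + 4 * var_mult j (var_deriv j c) b + 2 * c b"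
    by (simp add: var_deriv_norm2_mult var_linear_simps var_deriv_var_mult)
  then have "laplacian n (norm2_mult n c) b
      = (\<Sum>j<n. norm2_mult n (var_deriv j (var_deriv j c)) b + 4 * var_mult j (var_deriv j c) b + 2 * c b)"
    unfolding laplacian_def by (intro sum.cong) simp_all
  then show "laplacian n (norm2_mult n c) b = norm2_mult n (laplacian n c) b + 4 * euler_op n c b + 2 * real n * c b"
    by (simp add: sum.distrib laplacian_def euler_op_def norm2_mult_sum sum_distrib_left)
qed

lemma dir_deriv_lin_mult:
  "dir_deriv n y (lin_mult n y c) = (\<lambda>b. lin_mult n y (dir_deriv n y c) b + (\<Sum>i<n. y i ^ 2) * c b)"
proof
  fix b
  have "dir_deriv n y (lin_mult n y c) b = (\<Sum>j<n. y j * lin_mult n y (var_deriv j c) b + y j ^ 2 * c b)"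
    unfolding dir_deriv_def by (intro sum.cong) (simp_all add: var_deriv_lin_mult algebra_simps power2_eq_square)
  then show "dir_deriv n y (lin_mult n y c) b = lin_mult n y (dir_deriv n y c) b + (\<Sum>i<n. y i ^ 2) * c b"
    by (simp add: sum.distrib dir_deriv_def lin_mult_sum lin_mult_scale sum_distrib_left sum_distrib_right)
qed

lemma euler_op_lin_mult: "euler_op n (lin_mult n y c) = (\<lambda>b. lin_mult n y (euler_op n c) b + lin_mult n y c b)"
proof
  fix b
  have "euler_op n (lin_mult n y c) b = (\<Sum>j<n. lin_mult n y (var_mult j (var_deriv j c)) b + y j * var_mult j c b)"
    unfolding euler_op_def by (intro sum.cong) (simp_all add: var_deriv_lin_mult var_linear_simps var_mult_lin_mult)
  then show "euler_op n (lin_mult n y c) b = lin_mult n y (euler_op n c) b + lin_mult n y c b"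
    by (simp add: sum.distrib euler_op_def lin_mult_sum) (simp add: lin_mult_def)
qed

lemma euler_op_norm2_mult: "euler_op n (norm2_mult n c) = (\<lambda>b. norm2_mult n (euler_op n c) b + 2 * norm2_mult n c b)"
proof
  fix b
  have "euler_op n (norm2_mult n c) b = (\<Sum>j<n. norm2_mult n (var_mult j (var_deriv j c)) b + 2 * var_mult j (var_mult j c) b)"
    unfolding euler_op_def by (intro sum.cong) (simp_all add: var_deriv_norm2_mult var_linear_simps var_mult_norm2_mult)
  then show "euler_op n (norm2_mult n c) b = norm2_mult n (euler_op n c) b + 2 * norm2_mult n c b"
    by (simp add: sum.distrib euler_op_def norm2_mult_sum) (simp add: norm2_mult_def sum_distrib_left)
qed

lemma var_deriv_one_coeffs: "var_deriv i one_coeffs = (\<lambda>b. 0)"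
  by (rule ext) (simp add: var_deriv_def one_coeffs_def fun_eq_iff exI[of _ i])

lemma lin_mult_zero: "lin_mult n y (\<lambda>a. 0) = (\<lambda>b. 0)"
  by (simp add: lin_mult_def var_mult_zero)
lemma laplacian_one_coeffs: "laplacian n one_coeffs = (\<lambda>b. 0)"
  by (simp add: laplacian_def var_deriv_one_coeffs var_deriv_def)
lemma dir_deriv_one_coeffs: "dir_deriv n y one_coeffs = (\<lambda>b. 0)"
  by (simp add: dir_deriv_def var_deriv_one_coeffs)

definition lin_power :: "nat \<Rightarrow> (nat \<Rightarrow> real) \<Rightarrow> nat \<Rightarrow> coeffs" where
  "lin_power n y m = (lin_mult n y ^^ m) one_coeffs"

definition norm2_pow :: "nat \<Rightarrow> nat \<Rightarrow> coeffs \<Rightarrow> coeffs" where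
  "norm2_pow n k = norm2_mult n ^^ k"

lemma lin_power_Suc: "lin_power n y (Suc m) = lin_mult n y (lin_power n y m)"
  by (simp add: lin_power_def)

lemma norm2_pow_0 [simp]: "norm2_pow n 0 c = c"
  by (simp add: norm2_pow_def)

lemma norm2_pow_Suc: "norm2_pow n (Suc k) c = norm2_mult n (norm2_pow n k c)"
  by (simp add: norm2_pow_def)

lemma norm2_pow_scale: "norm2_pow n k (\<lambda>a. r * f a) = (\<lambda>b. r * norm2_pow n k f b)"
  by (induction k) (simp_all add: norm2_pow_Suc norm2_mult_scale)

lemma norm2_pow_zero: "norm2_pow n k (\<lambda>a. 0) = (\<lambda>b. 0)"
  by (induction k) (simp_all add: norm2_pow_Suc norm2_mult_zero)

lemma euler_op_lin_power: "euler_op n (lin_power n y m) = (\<lambda>b. real m * lin_power n y m b)"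
proof (induction m)
  case 0
  show ?case by (simp add: lin_power_def euler_op_def var_deriv_one_coeffs var_mult_def)
next
  case (Suc m)
  show ?case
    by (simp only: lin_power_Suc euler_op_lin_mult Suc lin_mult_scale) (simp add: algebra_simps)
qed

lemma euler_op_norm2_pow:
  assumes "euler_op n c = (\<lambda>b. real m * c b)"
  shows "euler_op n (norm2_pow n k c) = (\<lambda>b. real (2 * k + m) * norm2_pow n k c b)"
proof (induction k)
  case 0
  show ?case using assms by (simp add: norm2_pow_def)
next
  case (Suc k)
  show ?case
    by (simp only: norm2_pow_Suc euler_op_norm2_mult Suc norm2_mult_scale) (simp add: algebra_simps)
qed

lemma laplacian_norm2_pow:
  assumes "euler_op n c = (\<lambda>b. real m * c b)"
  shows "laplacian n (norm2_pow n (Suc k) c)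
    = (\<lambda>b. norm2_pow n (Suc k) (laplacian n c) b + 2 * real (k + 1) * real (2 * k + 2 * m + n) * norm2_pow n k c b)"
proof (induction k)
  case 0
  show ?case using assms
    by (simp add: norm2_pow_def laplacian_norm2_mult algebra_simps)
next
  case (Suc k)
  have "laplacian n (norm2_pow n (Suc (Suc k)) c)
      = (\<lambda>b. norm2_mult n (laplacian n (norm2_pow n (Suc k) c)) b
           + 4 * real (2 * Suc k + m) * norm2_pow n (Suc k) c b + 2 * real n * norm2_pow n (Suc k) c b)"
    by (simp only: norm2_pow_Suc[of n "Suc k"] laplacian_norm2_mult euler_op_norm2_pow[OF assms])
      (simp add: algebra_simps)
  then show ?case
    by (simp only: Suc norm2_mult_add norm2_mult_scale norm2_pow_Suc[symmetric]) (simp add: algebra_simps)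
qed

context
  fixes n :: nat and y :: "nat \<Rightarrow> real"
  assumes y_unit: "(\<Sum>i<n. y i ^ 2) = 1"
begin

lemma dir_deriv_lin_power: "dir_deriv n y (lin_power n y (Suc m)) = (\<lambda>b. real (Suc m) * lin_power n y m b)"
proof (induction m)
  case 0
  show ?case
    by (simp add: lin_power_def dir_deriv_lin_mult dir_deriv_one_coeffs lin_mult_zero y_unit)
next
  case (Suc m)
  show ?case
    by (subst lin_power_Suc, subst dir_deriv_lin_mult, subst Suc, simp only: lin_mult_scale)
      (simp add: y_unit lin_power_Suc algebra_simps)
qed

lemma laplacian_lin_power:
  "laplacian n (lin_power n y (Suc (Suc m))) = (\<lambda>b. real ((m + 2) * (m + 1)) * lin_power n y m b)"
proof (induction m)
  case 0
  have "laplacian n (lin_power n y 1) = (\<lambda>b. 0)"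
    by (simp add: lin_power_def laplacian_lin_mult laplacian_one_coeffs dir_deriv_one_coeffs lin_mult_zero)
  then show ?case
    by (subst lin_power_Suc, subst laplacian_lin_mult) (simp add: dir_deriv_lin_power[of 0, simplified] lin_mult_zero)
next
  case (Suc m)
  show ?case
    by (subst lin_power_Suc, subst laplacian_lin_mult, subst Suc, subst dir_deriv_lin_power)
      (simp only: lin_mult_scale, simp add: lin_power_Suc algebra_simps)
qed

end

lemma sum_fun_upd:
  fixes f :: "'a \<Rightarrow> 'b::comm_monoid_add"
  assumes "finite A" "i \<in> A"
  shows "(\<Sum>j\<in>A. (f(i := v)) j) + f i = (\<Sum>j\<in>A. f j) + v"
proof -
  have "(\<Sum>j\<in>A - {i}. (f(i := v)) j) = (\<Sum>j\<in>A - {i}. f j)"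
    by (intro sum.cong) auto
  then show ?thesis
    using sum.remove[OF assms, of "f(i := v)"] sum.remove[OF assms, of f] by (simp add: ac_simps)
qed

lemma monomial_fun_upd_Suc:
  fixes x :: "nat \<Rightarrow> 'a::comm_monoid_mult"
  assumes "i < n"
  shows "(\<Prod>j<n. x j ^ (b(i := b i + 1)) j) = x i * (\<Prod>j<n. x j ^ b j)"
proof -
  have "(\<Prod>j\<in>{..<n} - {i}. x j ^ (b(i := b i + 1)) j) = (\<Prod>j\<in>{..<n} - {i}. x j ^ b j)"
    by (intro prod.cong) auto
  then show ?thesis
    using assms prod.remove[of "{..<n}" i "\<lambda>j. x j ^ (b(i := b i + 1)) j"] prod.remove[of "{..<n}" i "\<lambda>j. x j ^ b j"]
    by (simp add: ac_simps)
qed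

lemma finite_exps_of_degree: "finite (exps_of_degree n t)"
proof -
  let ?ext = "\<lambda>(f::nat \<Rightarrow> nat) i. if i < n then f i else 0"
  have "exps_of_degree n t \<subseteq> ?ext ` ({..<n} \<rightarrow>\<^sub>E {0..t})"
  proof
    fix a assume a: "a \<in> exps_of_degree n t"
    have "a i \<le> t" if "i < n" for i
      using a member_le_sum[of i "{..<n}" a] that by (simp add: exps_of_degree_def)
    then have "restrict a {..<n} \<in> {..<n} \<rightarrow>\<^sub>E {0..t}" by auto
    moreover have "a = ?ext (restrict a {..<n})"
      using a by (auto simp: exps_of_degree_def fun_eq_iff)
    ultimately show "a \<in> ?ext ` ({..<n} \<rightarrow>\<^sub>E {0..t})" by blast
  qed
  then show ?thesis
    by (rule finite_subset) (intro finite_imageI finite_PiE; simp)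
qed

lemma exps_of_degree_0: "exps_of_degree n 0 = {\<lambda>_. 0}"
  by (auto simp: exps_of_degree_def fun_eq_iff) (metis lessThan_iff not_le)

lemma bij_betw_exps_of_degree_Suc:
  assumes i: "i < n"
  shows "bij_betw (\<lambda>b. b(i := b i + 1)) (exps_of_degree n t) {a \<in> exps_of_degree n (Suc t). 1 \<le> a i}"
proof (rule bij_betw_byWitness[where f' = "\<lambda>a. a(i := a i - 1)"])
  have upd: "(\<Sum>j<n. (a(i := v)) j) + a i = (\<Sum>j<n. a j) + v" for a v
    using i by (intro sum_fun_upd) auto
  show "(\<lambda>b. b(i := b i + 1)) ` exps_of_degree n t \<subseteq> {a \<in> exps_of_degree n (Suc t). 1 \<le> a i}"
  proof
    fix a assume "a \<in> (\<lambda>b. b(i := b i + 1)) ` exps_of_degree n t"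
    then obtain b where "b \<in> exps_of_degree n t" "a = b(i := b i + 1)" by blast
    then show "a \<in> {a \<in> exps_of_degree n (Suc t). 1 \<le> a i}"
      using i upd[of b "b i + 1"] by (auto simp: exps_of_degree_def)
  qed
  show "(\<lambda>a. a(i := a i - 1)) ` {a \<in> exps_of_degree n (Suc t). 1 \<le> a i} \<subseteq> exps_of_degree n t"
  proof
    fix b assume "b \<in> (\<lambda>a. a(i := a i - 1)) ` {a \<in> exps_of_degree n (Suc t). 1 \<le> a i}"
    then obtain a where "a \<in> exps_of_degree n (Suc t)" "1 \<le> a i" "b = a(i := a i - 1)" by blast
    then show "b \<in> exps_of_degree n t"
      using i upd[of a "a i - 1"] by (auto simp: exps_of_degree_def)
  qed
qed auto

lemma hpoly_eval_var_mult:
  assumes i: "i < n"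
  shows "hpoly_eval n (Suc t) (var_mult i c) x = x i * hpoly_eval n t c x"
proof -
  let ?T = "{a \<in> exps_of_degree n (Suc t). 1 \<le> a i}"
  have "hpoly_eval n (Suc t) (var_mult i c) x = (\<Sum>a\<in>?T. var_mult i c a * (\<Prod>j<n. x j ^ a j))"
    unfolding hpoly_eval_def
    by (rule sum.mono_neutral_right) (auto simp: var_mult_def finite_exps_of_degree)
  also have "\<dots> = (\<Sum>b\<in>exps_of_degree n t. var_mult i c (b(i := b i + 1)) * (\<Prod>j<n. x j ^ (b(i := b i + 1)) j))"
    by (rule sum.reindex_bij_betw[OF bij_betw_exps_of_degree_Suc[OF i], symmetric])
  also have "\<dots> = x i * hpoly_eval n t c x"
    unfolding monomial_fun_upd_Suc[OF i] by (simp add: hpoly_eval_def sum_distrib_left var_mult_def ac_simps)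
  finally show ?thesis .
qed

lemma hpoly_eval_add: "hpoly_eval n t (\<lambda>a. f a + g a) x = hpoly_eval n t f x + hpoly_eval n t g x"
  by (simp add: hpoly_eval_def algebra_simps sum.distrib)
lemma hpoly_eval_scale: "hpoly_eval n t (\<lambda>a. r * f a) x = r * hpoly_eval n t f x"
  by (simp add: hpoly_eval_def algebra_simps sum_distrib_left)
lemma hpoly_eval_sum: "hpoly_eval n t (\<lambda>a. \<Sum>k\<in>K. f k a) x = (\<Sum>k\<in>K. hpoly_eval n t (f k) x)"
  by (simp add: hpoly_eval_def sum_distrib_right sum.swap[of _ K])

lemma hpoly_eval_lin_mult:
  "hpoly_eval n (Suc t) (lin_mult n y c) x = (\<Sum>i<n. y i * x i) * hpoly_eval n t c x"
  by (simp add: lin_mult_def hpoly_eval_sum hpoly_eval_scale hpoly_eval_var_mult sum_distrib_right)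
    (simp add: sum_distrib_left ac_simps)

lemma hpoly_eval_norm2_mult:
  "hpoly_eval n (Suc (Suc t)) (norm2_mult n c) x = (\<Sum>i<n. x i ^ 2) * hpoly_eval n t c x"
  by (simp add: norm2_mult_def hpoly_eval_sum hpoly_eval_var_mult sum_distrib_right power2_eq_square)
    (simp add: sum_distrib_left ac_simps)

lemma hpoly_eval_lin_power: "hpoly_eval n m (lin_power n y m) x = (\<Sum>i<n. y i * x i) ^ m"
  by (induction m)
    (simp_all add: lin_power_Suc hpoly_eval_lin_mult, simp add: lin_power_def hpoly_eval_def exps_of_degree_0 one_coeffs_def)

lemma hpoly_eval_norm2_pow_sphere:
  assumes "(\<Sum>i<n. x i ^ 2) = 1" and "s = 2 * k + t"
  shows "hpoly_eval n s (norm2_pow n k c) x = hpoly_eval n t c x"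
  unfolding assms(2) by (induction k) (simp_all add: norm2_pow_def hpoly_eval_norm2_mult assms(1))

section \<open>The zonal harmonic of degree 6\<close>

definition dot :: "nat \<Rightarrow> (nat \<Rightarrow> real) \<Rightarrow> (nat \<Rightarrow> real) \<Rightarrow> real" where
  "dot n x y = (\<Sum>i<n. x i * y i)"

lemma sphere_pts_dot_self: "x \<in> sphere_pts n \<Longrightarrow> dot n x x = 1"
  by (simp add: sphere_pts_def dot_def power2_eq_square)

definition Q6_core :: "nat \<Rightarrow> real \<Rightarrow> real" where
  "Q6_core n t = (real n + 4) * (real n + 6) * (real n + 8) * t ^ 6 - 15 * (real n + 4) * (real n + 6) * t ^ 4
      + 45 * (real n + 4) * t ^ 2 - 15"

definition Q6_scale :: "nat \<Rightarrow> real" where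
  "Q6_scale n = real n * (real n + 2) * (real n + 10) / fact 6"

lemma Q6_eq_scale_core: "Q6 n t = Q6_scale n * Q6_core n t"
  by (simp add: Q6_def Q6_scale_def Q6_core_def algebra_simps)

text \<open>\<open>Q6_core n \<langle>x,y\<rangle>\<close> homogenised to degree 6 with powers of \<open>|x|\<^sup>2\<close>.\<close>
definition zonal6 :: "nat \<Rightarrow> (nat \<Rightarrow> real) \<Rightarrow> coeffs" where
  "zonal6 n y = (\<lambda>b. (real n + 4) * (real n + 6) * (real n + 8) * lin_power n y 6 b
      + (- 15 * (real n + 4) * (real n + 6)) * norm2_pow n 1 (lin_power n y 4) b
      + 45 * (real n + 4) * norm2_pow n 2 (lin_power n y 2) b
      + (- 15) * norm2_pow n 3 (lin_power n y 0) b)"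

lemma laplacian_zonal6:
  assumes y_unit: "(\<Sum>i<n. y i ^ 2) = 1"
  shows "laplacian n (zonal6 n y) = (\<lambda>b. 0)"
proof -
  have hom: "\<And>m. euler_op n (lin_power n y m) = (\<lambda>b. real m * lin_power n y m b)"
    by (rule euler_op_lin_power)
  have L6: "laplacian n (lin_power n y 6) = (\<lambda>b. 30 * lin_power n y 4 b)"
    using laplacian_lin_power[OF y_unit, of 4] by (simp add: numeral_eq_Suc)
  have L4: "laplacian n (lin_power n y 4) = (\<lambda>b. 12 * lin_power n y 2 b)"
    using laplacian_lin_power[OF y_unit, of 2] by (simp add: numeral_eq_Suc)
  have L2: "laplacian n (lin_power n y 2) = (\<lambda>b. 2 * lin_power n y 0 b)"
    using laplacian_lin_power[OF y_unit, of 0] by (simp add: numeral_eq_Suc)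
  have L0: "laplacian n (lin_power n y 0) = (\<lambda>b. 0)"
    by (simp add: lin_power_def laplacian_one_coeffs)
  have M1: "laplacian n (norm2_pow n 1 (lin_power n y 4))
      = (\<lambda>b. 12 * norm2_pow n 1 (lin_power n y 2) b + (2 * real n + 16) * lin_power n y 4 b)"
    using laplacian_norm2_pow[OF hom[of 4], of 0] by (simp add: L4 norm2_pow_scale algebra_simps)
  have M2: "laplacian n (norm2_pow n 2 (lin_power n y 2))
      = (\<lambda>b. 2 * norm2_pow n 2 (lin_power n y 0) b + (4 * real n + 24) * norm2_pow n 1 (lin_power n y 2) b)"
    using laplacian_norm2_pow[OF hom[of 2], of 1, unfolded Suc_1] by (simp add: L2 norm2_pow_scale algebra_simps)
  have M3: "laplacian n (norm2_pow n 3 (lin_power n y 0))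
      = (\<lambda>b. (6 * real n + 24) * norm2_pow n 2 (lin_power n y 0) b)"
    using laplacian_norm2_pow[OF hom[of 0], of 2] by (simp add: L0 norm2_pow_zero algebra_simps)
  show ?thesis
    unfolding zonal6_def
    by (simp only: laplacian_add laplacian_scale L6 M1 M2 M3) (simp add: algebra_simps)
qed

lemma harmonic_hpoly_if_laplacian_zero:
  assumes "laplacian n c = (\<lambda>b. 0)"
  shows "harmonic_hpoly n t c"
  unfolding harmonic_hpoly_def
proof (intro impI ballI)
  fix b :: "nat \<Rightarrow> nat"
  have "laplacian n c b = (\<Sum>i<n. real ((b i + 2) * (b i + 1)) * c (b(i := b i + 2)))"
    unfolding laplacian_def var_deriv_def by (intro sum.cong) (simp_all add: algebra_simps)
  then show "(\<Sum>i<n. real ((b i + 2) * (b i + 1)) * c (b(i := b i + 2))) = 0"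
    using assms by (simp add: fun_eq_iff)
qed

lemma hpoly_eval_zonal6:
  assumes "(\<Sum>i<n. x i ^ 2) = 1"
  shows "hpoly_eval n 6 (zonal6 n y) x = Q6_core n (dot n x y)"
proof -
  have "hpoly_eval n 6 (norm2_pow n 1 c) x = hpoly_eval n 4 c x"
    and "hpoly_eval n 6 (norm2_pow n 2 c) x = hpoly_eval n 2 c x"
    and "hpoly_eval n 6 (norm2_pow n 3 c) x = hpoly_eval n 0 c x" for c
    by (rule hpoly_eval_norm2_pow_sphere[OF assms]; simp)+
  moreover have "(\<Sum>i<n. y i * x i) = dot n x y"
    by (simp add: dot_def mult.commute)
  ultimately show ?thesis
    unfolding zonal6_def
    by (simp only: hpoly_eval_add hpoly_eval_scale hpoly_eval_lin_power) (simp add: Q6_core_def algebra_simps)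
qed

lemma design_double_sum_Q6_core:
  assumes "design_harmonic_index n 6 Y"
  shows "(\<Sum>y\<in>Y. \<Sum>x\<in>Y. Q6_core n (dot n x y)) = 0"
proof -
  have sphere: "Y \<subseteq> sphere_pts n"
    and design: "\<And>c. harmonic_hpoly n 6 c \<Longrightarrow> (\<Sum>x\<in>Y. hpoly_eval n 6 c x) = 0"
    using assms by (auto simp: design_harmonic_index_def)
  have "(\<Sum>x\<in>Y. Q6_core n (dot n x y)) = 0" if "y \<in> Y" for y
  proof -
    have "(\<Sum>i<n. y i ^ 2) = 1" using that sphere by (auto simp: sphere_pts_def)
    then have "harmonic_hpoly n 6 (zonal6 n y)"
      by (intro harmonic_hpoly_if_laplacian_zero laplacian_zonal6)
    moreover have "hpoly_eval n 6 (zonal6 n y) x = Q6_core n (dot n x y)" if "x \<in> Y" for x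
      using that sphere by (intro hpoly_eval_zonal6) (auto simp: sphere_pts_def)
    ultimately show ?thesis
      using design by (metis (no_types, lifting) sum.cong)
  qed
  then show ?thesis by simp
qed

section \<open>The cubic behind \<open>Q\<^sub>6\<close>\<close>

definition Q6_cubic :: "nat \<Rightarrow> real \<Rightarrow> real" where
  "Q6_cubic n u = (real n + 4) * (real n + 6) * (real n + 8) * u ^ 3 - 15 * (real n + 4) * (real n + 6) * u ^ 2
      + 45 * (real n + 4) * u - 15"

text \<open>The larger root of the derivative of Q6_cubic, i.e. of \<open>(n+6)(n+8) u\<^sup>2 - 10(n+6) u + 15\<close>.\<close>
definition Q6_cubic_argmin :: "nat \<Rightarrow> real" where
  "Q6_cubic_argmin n = (5 * (real n + 6) + sqrt (10 * (real n + 3) * (real n + 6))) / ((real n + 6) * (real n + 8))"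

lemma Q6_cubic_argmin_mult:
  "Q6_cubic_argmin n * ((real n + 6) * (real n + 8)) = 5 * (real n + 6) + sqrt (10 * (real n + 3) * (real n + 6))"
  by (simp add: Q6_cubic_argmin_def)

lemma Q6_core_eq_cubic: "Q6_core n t = Q6_cubic n (t ^ 2)"
  by (simp add: Q6_core_def Q6_cubic_def power_mult[symmetric])

lemma Q6_cubic_one: "Q6_cubic n 1 = (real n ^ 2 - 1) * (real n + 3)"
  by (simp add: Q6_cubic_def power2_eq_square algebra_simps)

lemma Q6_cubic_argmin_root:
  "(real n + 6) * (real n + 8) * Q6_cubic_argmin n ^ 2 - 10 * (real n + 6) * Q6_cubic_argmin n + 15 = 0"
proof -
  define a where "a = real n + 6"
  define u where "u = Q6_cubic_argmin n"
  define w where "w = sqrt (10 * (real n + 3) * (real n + 6))"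
  have a: "a > 0" by (simp add: a_def)
  have u: "u * (a * (a + 2)) = 5 * a + w"
    using Q6_cubic_argmin_mult[of n] by (simp add: u_def a_def w_def algebra_simps)
  have w: "w ^ 2 = 10 * a * (a - 3)"
    by (simp add: w_def a_def algebra_simps)
  have "(a * (a + 2)) * (a * (a + 2) * u ^ 2 - 10 * a * u + 15)
      = (u * (a * (a + 2))) ^ 2 - 10 * a * (u * (a * (a + 2))) + 15 * a * (a + 2)"
    by (simp add: algebra_simps power2_eq_square)
  also have "\<dots> = 0"
    unfolding u using w by (simp add: algebra_simps power2_eq_square)
  finally have "a * (a + 2) * u ^ 2 - 10 * a * u + 15 = 0"
    using a by simp
  then show ?thesis
    by (simp add: a_def u_def algebra_simps)
qed

lemma Q6_cubic_minus_argmin: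
  "Q6_cubic n u - Q6_cubic n (Q6_cubic_argmin n)
    = (real n + 4) * (real n + 6) * (u - Q6_cubic_argmin n) ^ 2
      * ((real n + 8) * u - 15 + 2 * (real n + 8) * Q6_cubic_argmin n)"
  using Q6_cubic_argmin_root[of n] unfolding Q6_cubic_def by algebra

lemma Q6_cubic_at_argmin:
  "(real n + 8) * Q6_cubic n (Q6_cubic_argmin n)
    = (real n + 4) * (75 - 20 * (real n + 3) * Q6_cubic_argmin n) - 15 * (real n + 8)"
  using Q6_cubic_argmin_root[of n] unfolding Q6_cubic_def by algebra

lemma Q6_cubic_argmin_bounds:
  assumes "3 \<le> n"
  shows "15 < 2 * (real n + 8) * Q6_cubic_argmin n" "0 < Q6_cubic_argmin n" "Q6_cubic_argmin n < 1"
proof -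
  define a where "a = real n + 6"
  define w where "w = sqrt (10 * (real n + 3) * (real n + 6))"
  have a: "9 \<le> a" using assms by (simp add: a_def)
  have w: "w ^ 2 = 10 * a * (a - 3)" "0 \<le> w"
    by (simp_all add: w_def a_def algebra_simps)
  have u: "Q6_cubic_argmin n = (5 * a + w) / (a * (a + 2))"
    by (simp add: Q6_cubic_argmin_def a_def w_def add.assoc)
  have pos: "0 < a * (a + 2)" using a by simp
  have "(2 * w) ^ 2 - (5 * a) ^ 2 = 15 * (a * (a - 8))"
    using w by (simp add: power_mult_distrib power2_eq_square algebra_simps)
  moreover have "0 < 15 * (a * (a - 8))"
    using a by (intro mult_pos_pos) auto
  ultimately have "5 * a < 2 * w"
    using w power2_less_imp_less[of "5 * a" "2 * w"] by simp
  moreover have "2 * (a + 2) * Q6_cubic_argmin n = 2 * (5 * a + w) / a"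
    using pos a by (simp add: u field_simps)
  ultimately show "15 < 2 * (real n + 8) * Q6_cubic_argmin n"
    using a by (simp add: a_def less_divide_eq add.assoc)
  show "0 < Q6_cubic_argmin n"
    using pos w a by (simp add: u)
  have "54 \<le> a * (a - 3)"
    using a mult_mono[of 9 a 6 "a - 3"] by simp
  moreover have "(a * (a - 3)) ^ 2 - w ^ 2 = (a * (a - 3)) * (a * (a - 3) - 10)"
    using w by (simp add: power2_eq_square algebra_simps)
  ultimately have "w ^ 2 < (a * (a - 3)) ^ 2"
    using mult_pos_pos[of "a * (a - 3)" "a * (a - 3) - 10"] by linarith
  then have "w < a * (a - 3)"
    using \<open>54 \<le> a * (a - 3)\<close> power2_less_imp_less[of w "a * (a - 3)"] by simp
  then have "5 * a + w < a * (a + 2)"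
    by (simp add: algebra_simps)
  then show "Q6_cubic_argmin n < 1"
    using pos by (simp add: u divide_less_eq)
qed

lemma Q6_cubic_ge_argmin:
  assumes "3 \<le> n" "0 \<le> u"
  shows "Q6_cubic n (Q6_cubic_argmin n) \<le> Q6_cubic n u"
    and "Q6_cubic n u = Q6_cubic n (Q6_cubic_argmin n) \<Longrightarrow> u = Q6_cubic_argmin n"
proof -
  have "0 \<le> (real n + 8) * u"
    using assms(2) by simp
  then have pos: "0 < (real n + 8) * u - 15 + 2 * (real n + 8) * Q6_cubic_argmin n"
    using Q6_cubic_argmin_bounds(1)[OF assms(1)] by linarith
  then have "0 \<le> (real n + 4) * (real n + 6) * (u - Q6_cubic_argmin n) ^ 2
      * ((real n + 8) * u - 15 + 2 * (real n + 8) * Q6_cubic_argmin n)"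
    by simp
  then show "Q6_cubic n (Q6_cubic_argmin n) \<le> Q6_cubic n u"
    using Q6_cubic_minus_argmin[of n u] by linarith
  assume "Q6_cubic n u = Q6_cubic n (Q6_cubic_argmin n)"
  then show "u = Q6_cubic_argmin n"
    using Q6_cubic_minus_argmin[of n u] pos by simp
qed

lemma Q6_cubic_min_neg:
  assumes "3 \<le> n"
  shows "Q6_cubic n (Q6_cubic_argmin n) < 0"
  using Q6_cubic_ge_argmin(1)[OF assms, of 0] by (simp add: Q6_cubic_def)

lemma c6_eq:
  assumes "3 \<le> n"
  shows "c6 n = - (Q6_scale n * Q6_cubic n (Q6_cubic_argmin n))"
proof -
  have "Inf (Q6 n ` {-1..1}) = Q6_scale n * Q6_cubic n (Q6_cubic_argmin n)"
  proof (rule cInf_eq_minimum)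
    have u: "0 < Q6_cubic_argmin n" "Q6_cubic_argmin n < 1"
      using Q6_cubic_argmin_bounds[OF assms] by auto
    then have "0 \<le> sqrt (Q6_cubic_argmin n)" "sqrt (Q6_cubic_argmin n) \<le> 1"
      by simp_all
    then have "sqrt (Q6_cubic_argmin n) \<in> {-1..1}"
      unfolding atLeastAtMost_iff by linarith
    moreover have "Q6 n (sqrt (Q6_cubic_argmin n)) = Q6_scale n * Q6_cubic n (Q6_cubic_argmin n)"
      using u by (simp add: Q6_eq_scale_core Q6_core_eq_cubic)
    ultimately show "Q6_scale n * Q6_cubic n (Q6_cubic_argmin n) \<in> Q6 n ` {-1..1}"
      by (metis image_eqI)
  next
    fix q assume "q \<in> Q6 n ` {-1..1}"
    then obtain t where "q = Q6 n t" by auto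
    moreover have "0 < Q6_scale n" using assms by (simp add: Q6_scale_def)
    ultimately show "Q6_scale n * Q6_cubic n (Q6_cubic_argmin n) \<le> q"
      using Q6_cubic_ge_argmin(1)[OF assms, of "t ^ 2"] by (simp add: Q6_eq_scale_core Q6_core_eq_cubic)
  qed
  then show ?thesis by (simp add: c6_def)
qed

lemma b6_eq:
  assumes "3 \<le> n"
  shows "b6 n = 1 + Q6_cubic n 1 / (- Q6_cubic n (Q6_cubic_argmin n))"
proof -
  have "0 < Q6_scale n" using assms by (simp add: Q6_scale_def)
  then show ?thesis
    by (simp add: b6_def c6_eq[OF assms] Q6_eq_scale_core Q6_core_eq_cubic)
qed

section \<open>Tight designs are equiangular\<close>

lemma tight_design_equiangular:
  assumes n: "3 \<le> n" and design: "design_harmonic_index n 6 Y" and tight: "real (card Y) = b6 n"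
    and xy: "x \<in> Y" "y \<in> Y" "x \<noteq> y"
  shows "dot n x y ^ 2 = Q6_cubic_argmin n"
proof -
  define m where "m = Q6_cubic n (Q6_cubic_argmin n)"
  define d where "d x y = Q6_core n (dot n x y) - m" for x y
  have fin: "finite Y" and unit: "\<And>x. x \<in> Y \<Longrightarrow> dot n x x = 1"
    using design by (auto simp: design_harmonic_index_def sphere_pts_dot_self)
  have d_nonneg: "0 \<le> d x y" for x y
    using Q6_cubic_ge_argmin(1)[OF n, of "dot n x y ^ 2"] by (simp add: d_def m_def Q6_core_eq_cubic)
  have tight_eq: "Q6_cubic n 1 + (real (card Y) - 1) * m = 0"
    using tight b6_eq[OF n] Q6_cubic_min_neg[OF n] by (simp add: m_def field_simps)
  have row: "(\<Sum>x\<in>Y. Q6_core n (dot n x y)) = (\<Sum>x\<in>Y - {y}. d x y) + Q6_cubic n 1 + (real (card Y) - 1) * m"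
    if "y \<in> Y" for y
  proof -
    have "(\<Sum>x\<in>Y. Q6_core n (dot n x y)) = Q6_core n (dot n y y) + (\<Sum>x\<in>Y - {y}. d x y + m)"
      using fin that by (simp add: sum.remove d_def)
    moreover have "1 \<le> card Y"
      using fin that by (auto simp: Suc_le_eq card_gt_0_iff)
    ultimately show ?thesis
      using fin that unit by (simp add: sum.distrib Q6_core_eq_cubic of_nat_diff)
  qed
  have "(\<Sum>y\<in>Y. \<Sum>x\<in>Y - {y}. d x y) = (\<Sum>y\<in>Y. \<Sum>x\<in>Y. Q6_core n (dot n x y))"
    by (rule sum.cong) (simp_all add: row tight_eq)
  also have "\<dots> = 0"
    by (rule design_double_sum_Q6_core[OF design])
  finally have "d x y = 0"
    using fin xy d_nonneg by (simp add: sum_nonneg_eq_0_iff sum_nonneg)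
  then have "Q6_cubic n (dot n x y ^ 2) = Q6_cubic n (Q6_cubic_argmin n)"
    by (simp add: d_def m_def Q6_core_eq_cubic)
  then show ?thesis
    using Q6_cubic_ge_argmin(2)[OF n] by simp
qed

section \<open>Gerzon's bound\<close>

interpretation real_fun: vector_space "\<lambda>(r::real) (f::'a \<Rightarrow> real) i. r * f i"
  by unfold_locales (auto simp: fun_eq_iff algebra_simps)

lemma sum_fun_apply: "(\<Sum>k\<in>K. (f k :: 'b \<Rightarrow> real)) q = (\<Sum>k\<in>K. f k q)"
  by (induction K rule: infinite_finite_induct) auto

lemma real_fun_span_indicators:
  assumes "finite I" "\<And>q. q \<notin> I \<Longrightarrow> f q = 0"
  shows "f \<in> real_fun.span ((\<lambda>p q. if q = p then 1 else 0) ` I)"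
proof -
  have "f = (\<Sum>p\<in>I. (\<lambda>q. f p * (if q = p then 1 else 0)))"
  proof
    fix q
    have "(\<Sum>p\<in>I. (\<lambda>q. f p * (if q = p then 1 else 0))) q = (\<Sum>p\<in>I. if q = p then f p else 0)"
      unfolding sum_fun_apply by (intro sum.cong) auto
    then show "f q = (\<Sum>p\<in>I. (\<lambda>q. f p * (if q = p then 1 else 0))) q"
      using assms by (simp add: sum.delta')
  qed
  also have "\<dots> \<in> real_fun.span ((\<lambda>p q. if q = p then 1 else 0) ` I)"
    by (intro real_fun.span_sum real_fun.span_scale[where c = "f _", simplified] real_fun.span_base) simp
  finally show ?thesis .
qed

lemma card_independent_le_support:
  assumes "finite I" "real_fun.independent S" "\<And>f q. f \<in> S \<Longrightarrow> q \<notin> I \<Longrightarrow> f q = 0"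
  shows "card S \<le> card I"
proof -
  define B where "B = (\<lambda>p q. if q = p then 1 else 0 :: real) ` I"
  have "S \<subseteq> real_fun.span B"
    using assms(1,3) real_fun_span_indicators unfolding B_def by blast
  then have "card S \<le> card B"
    using real_fun.independent_span_bound[of B S] assms(1,2) by (simp add: B_def)
  also have "\<dots> \<le> card I"
    unfolding B_def by (rule card_image_le[OF assms(1)])
  finally show ?thesis .
qed

lemma equiangular_gram_kernel:
  fixes d :: "'a \<Rightarrow> real"
  assumes "finite S" "0 \<le> \<beta>" "\<beta> < 1"
    and kernel: "\<And>y. y \<in> S \<Longrightarrow> (\<Sum>x\<in>S. d x * (if x = y then 1 else \<beta>)) = 0"
    and "y \<in> S"
  shows "d y = 0"
proof -
  define C where "C = (\<Sum>x\<in>S. d x)"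
  have row: "d y * (1 - \<beta>) + \<beta> * C = 0" if "y \<in> S" for y
  proof -
    have "(\<Sum>x\<in>S. d x * (if x = y then 1 else \<beta>)) = (\<Sum>x\<in>S. \<beta> * d x + (if x = y then (1 - \<beta>) * d x else 0))"
      by (intro sum.cong) (auto simp: algebra_simps)
    also have "\<dots> = \<beta> * C + (1 - \<beta>) * d y"
      using assms(1) that by (simp add: sum.distrib sum_distrib_left C_def)
    finally show ?thesis
      using kernel[OF that] by (simp add: algebra_simps)
  qed
  have "(\<Sum>y\<in>S. d y * (1 - \<beta>) + \<beta> * C) = C * (1 - \<beta>) + real (card S) * \<beta> * C"
    by (simp add: sum.distrib C_def sum_distrib_right)
  also have "\<dots> = C * (1 - \<beta> + real (card S) * \<beta>)"
    by (simp add: algebra_simps)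
  finally have "(\<Sum>y\<in>S. d y * (1 - \<beta>) + \<beta> * C) = C * (1 - \<beta> + real (card S) * \<beta>)" .
  moreover have "0 < 1 - \<beta> + real (card S) * \<beta>"
    using assms(2,3) by (simp add: add_pos_nonneg)
  ultimately have "C = 0"
    using row by simp
  then show ?thesis
    using row[OF assms(5)] assms(3) by simp
qed

definition outer :: "nat \<Rightarrow> (nat \<Rightarrow> real) \<Rightarrow> nat \<times> nat \<Rightarrow> real" where
  "outer n x = (\<lambda>(i, j). if i < n \<and> j < n then x i * x j else 0)"

lemma sum_outer_mult: "(\<Sum>p\<in>{..<n} \<times> {..<n}. outer n x p * outer n y p) = dot n x y ^ 2"
proof -
  have "(\<Sum>p\<in>{..<n} \<times> {..<n}. outer n x p * outer n y p) = (\<Sum>(i, j)\<in>{..<n} \<times> {..<n}. (x i * y i) * (x j * y j))"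
    by (intro sum.cong) (auto simp: outer_def)
  also have "\<dots> = (\<Sum>i<n. \<Sum>j<n. (x i * y i) * (x j * y j))"
    by (rule sum.cartesian_product[symmetric])
  finally show ?thesis
    by (simp add: dot_def power2_eq_square sum_product)
qed

text \<open>Gerzon's bound, proved through the linear independence of the rank one matrices \<open>x x\<^sup>T\<close>.\<close>
lemma equiangular_card_le_square:
  assumes fin: "finite S" and unit: "\<And>x. x \<in> S \<Longrightarrow> dot n x x = 1"
    and equi: "\<And>x y. x \<in> S \<Longrightarrow> y \<in> S \<Longrightarrow> x \<noteq> y \<Longrightarrow> dot n x y ^ 2 = \<beta>"
    and \<beta>: "0 \<le> \<beta>" "\<beta> < 1"
  shows "card S \<le> n * n"
proof -
  let ?I = "{..<n} \<times> {..<n}"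
  have gram: "(\<Sum>p\<in>?I. outer n x p * outer n y p) = (if x = y then 1 else \<beta>)"
    if "x \<in> S" "y \<in> S" for x y
    using that unit equi by (simp add: sum_outer_mult)
  have inj: "inj_on (outer n) S"
  proof (rule inj_onI, rule ccontr)
    fix x y assume xy: "x \<in> S" "y \<in> S" "outer n x = outer n y" "x \<noteq> y"
    then show False
      using gram[of x y] gram[of x x] \<beta> by simp
  qed
  have "real_fun.independent (outer n ` S)"
  proof
    assume "real_fun.dependent (outer n ` S)"
    then obtain c v where v: "v \<in> outer n ` S" "c v \<noteq> 0"
      and comb: "(\<Sum>v\<in>outer n ` S. (\<lambda>i. c v * v i)) = 0"
      using real_fun.dependent_finite[of "outer n ` S"] fin by auto
    have kernel: "(\<Sum>x\<in>S. c (outer n x) * (if x = y then 1 else \<beta>)) = 0" if "y \<in> S" for y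
    proof -
      have "0 = (\<Sum>p\<in>?I. (\<Sum>v\<in>outer n ` S. (\<lambda>i. c v * v i)) p * outer n y p)"
        by (simp add: comb)
      also have "\<dots> = (\<Sum>p\<in>?I. \<Sum>x\<in>S. c (outer n x) * (outer n x p * outer n y p))"
        by (simp add: sum.reindex[OF inj] sum_fun_apply sum_distrib_right mult.assoc)
      also have "\<dots> = (\<Sum>x\<in>S. \<Sum>p\<in>?I. c (outer n x) * (outer n x p * outer n y p))"
        by (rule sum.swap)
      also have "\<dots> = (\<Sum>x\<in>S. c (outer n x) * (\<Sum>p\<in>?I. outer n x p * outer n y p))"
        by (simp add: sum_distrib_left)
      also have "\<dots> = (\<Sum>x\<in>S. c (outer n x) * (if x = y then 1 else \<beta>))"
        using that gram by simp
      finally show ?thesis ..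
    qed
    have "c (outer n x) = 0" if "x \<in> S" for x
      using equiangular_gram_kernel[OF fin \<beta>, of "\<lambda>x. c (outer n x)", OF kernel that] .
    then show False
      using v by blast
  qed
  then have "card (outer n ` S) \<le> card ?I"
    by (rule card_independent_le_support[rotated]) (auto simp: outer_def split: if_split_asm)
  then show ?thesis
    using card_image[OF inj] by simp
qed

section \<open>Large dimensions\<close>

lemma Q6_cubic_argmin_le: "Q6_cubic_argmin n \<le> 49 / (6 * (real n + 8))"
proof -
  define a where "a = real n + 6"
  define w where "w = sqrt (10 * (real n + 3) * (real n + 6))"
  have a: "6 \<le> a" by (simp add: a_def)
  have w: "w ^ 2 = 10 * a * (a - 3)"
    by (simp add: w_def a_def algebra_simps)
  have "(19 * a / 6) ^ 2 - w ^ 2 = a ^ 2 / 36 + 30 * a"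
    unfolding w by (simp add: power2_eq_square algebra_simps)
  moreover have "0 \<le> a ^ 2 / 36 + 30 * a"
    using a by simp
  ultimately have "w ^ 2 \<le> (19 * a / 6) ^ 2"
    by linarith
  then have "w \<le> 19 * a / 6"
    by (rule power2_le_imp_le) (use a in simp)
  then have "(5 * a + w) / (a * (a + 2)) \<le> (5 * a + 19 * a / 6) / (a * (a + 2))"
    using a by (intro divide_right_mono) simp_all
  also have "\<dots> = (a * (49 / 6)) / (a * (a + 2))"
    by simp
  also have "\<dots> = 49 / (6 * (a + 2))"
    using a by simp
  finally show ?thesis
    by (simp add: Q6_cubic_argmin_def a_def w_def add.assoc)
qed

lemma neg_Q6_cubic_min_lt:
  assumes "89 \<le> n"
  shows "- Q6_cubic n (Q6_cubic_argmin n) < real n + 3"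
proof -
  define u where "u = Q6_cubic_argmin n"
  define v where "v = (real n + 8) * u"
  define c where "c = 120 * (real n + 3) * (real n + 4)"
  have "v \<le> 49 / 6"
    using Q6_cubic_argmin_le[of n] by (simp add: v_def u_def field_simps)
  then have "c * v \<le> c * (49 / 6)"
    by (rule mult_left_mono) (simp add: c_def)
  moreover have "6 * (real n + 8) ^ 2 * (- Q6_cubic n u) = - 6 * (real n + 8) * ((real n + 8) * Q6_cubic n u)"
    by (simp add: power2_eq_square algebra_simps)
  then have "6 * (real n + 8) ^ 2 * (- Q6_cubic n u) = 90 * (real n + 8) ^ 2 - 450 * (real n + 4) * (real n + 8) + c * v"
    unfolding u_def Q6_cubic_at_argmin by (simp add: c_def v_def u_def power2_eq_square algebra_simps)
  moreover have "90 * (real n + 8) ^ 2 - 450 * (real n + 4) * (real n + 8) + c * (49 / 6) < 6 * (real n + 8) ^ 2 * (real n + 3)"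
  proof -
    define t where "t = real n - 89"
    have "0 \<le> t" using assms by (simp add: t_def)
    then have "0 \<le> 6 * t ^ 3 + 1096 * t ^ 2 + 50282 * t"
      by simp
    moreover have "6 * (real n + 8) ^ 2 * (real n + 3) - (90 * (real n + 8) ^ 2 - 450 * (real n + 4) * (real n + 8) + c * (49 / 6))
        = 6 * t ^ 3 + 1096 * t ^ 2 + 50282 * t + 21528"
      by (simp add: t_def c_def power2_eq_square power3_eq_cube algebra_simps)
    ultimately show ?thesis
      by linarith
  qed
  ultimately have "6 * (real n + 8) ^ 2 * (- Q6_cubic n u) < 6 * (real n + 8) ^ 2 * (real n + 3)"
    by linarith
  then show ?thesis
    unfolding u_def by (rule mult_left_less_imp_less) simp
qed

lemma b6_gt_square:
  assumes "89 \<le> n"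
  shows "real n ^ 2 < b6 n"
proof -
  have n: "3 \<le> n" using assms by simp
  define m where "m = - Q6_cubic n (Q6_cubic_argmin n)"
  have m: "0 < m" "m < real n + 3"
    using Q6_cubic_min_neg[OF n] neg_Q6_cubic_min_lt[OF assms] by (simp_all add: m_def)
  have "1 < real n ^ 2" using assms by simp
  then have "real n ^ 2 - 1 < (real n ^ 2 - 1) * ((real n + 3) / m)"
    using m by (simp add: less_divide_eq)
  then show ?thesis
    using b6_eq[OF n] by (simp add: m_def Q6_cubic_one)
qed

section \<open>Integrality of \<open>b\<^sub>n\<^sub>,\<^sub>6\<close>\<close>

lemma sqrt_nat_rational_imp_square:
  assumes "sqrt (real m) \<in> \<rat>"
  shows "\<exists>k. m = k ^ 2"
proof -
  obtain p q :: nat where q: "q \<noteq> 0" and pq: "\<bar>sqrt (real m)\<bar> = real p / real q" and "coprime p q"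
    using Rats_abs_nat_div_natE[OF assms] by metis
  then have "real m = (real p / real q) ^ 2"
    by (metis abs_of_nonneg of_nat_0_le_iff real_sqrt_ge_zero real_sqrt_pow2)
  then have "real m * real q ^ 2 = real p ^ 2"
    using q by (simp add: field_simps)
  then have mq: "m * q ^ 2 = p ^ 2"
    by (metis of_nat_eq_iff of_nat_mult of_nat_power)
  then have "q ^ 2 dvd p ^ 2"
    by (metis dvd_triv_right)
  moreover have "coprime (p ^ 2) (q ^ 2)"
    using \<open>coprime p q\<close> by simp
  ultimately have "is_unit (q ^ 2)"
    by (meson coprime_common_divisor dvd_refl)
  then show ?thesis
    using mq by auto
qed

lemma b6_integral_imp_square:
  assumes n: "3 \<le> n" and b: "b6 n = real N"
  shows "\<exists>k. 10 * (n + 3) * (n + 6) = k ^ 2"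
proof -
  define u where "u = Q6_cubic_argmin n"
  define m where "m = Q6_cubic n u"
  have g1: "0 < Q6_cubic n 1"
    using n by (simp add: Q6_cubic_one)
  have m: "m < 0"
    using Q6_cubic_min_neg[OF n] by (simp add: m_def u_def)
  have N: "real N - 1 = Q6_cubic n 1 / - m"
    using b b6_eq[OF n] by (simp add: m_def u_def)
  have "0 < real N - 1"
    unfolding N using g1 m by (intro divide_pos_pos) simp_all
  moreover have "(real N - 1) * m = - Q6_cubic n 1"
    unfolding N using m by (simp add: field_simps)
  ultimately have "m = - Q6_cubic n 1 / (real N - 1)"
    by (intro eq_divide_imp) (simp_all add: mult.commute)
  then have "m \<in> \<rat>"
    by (simp add: Q6_cubic_one)
  moreover have "u = (60 * real n + 180 - (real n + 8) * m) / (20 * (real n + 3) * (real n + 4))"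
    using Q6_cubic_at_argmin[of n] by (intro eq_divide_imp) (simp, simp add: m_def u_def algebra_simps)
  ultimately have "u \<in> \<rat>"
    by simp
  moreover have "sqrt (real (10 * (n + 3) * (n + 6))) = u * ((real n + 6) * (real n + 8)) - 5 * (real n + 6)"
    using Q6_cubic_argmin_mult[of n] by (simp add: u_def)
  ultimately show ?thesis
    by (intro sqrt_nat_rational_imp_square) simp
qed

lemma not_square_between: "(m::nat) ^ 2 < v \<Longrightarrow> v < (m + 1) ^ 2 \<Longrightarrow> v \<noteq> k ^ 2"
  using power_less_imp_less_base[of m 2 k] power_less_imp_less_base[of k 2 "m + 1"] by auto

lemma square_dimension_le_88:
  fixes n k :: nat
  assumes "3 \<le> n" "n \<le> 88" and square: "10 * (n + 3) * (n + 6) = k ^ 2"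
  shows "n = 24"
proof (rule ccontr)
  assume "n \<noteq> 24"
  define ns where "ns = [3..<24] @ [25..<89]"
  text \<open>The integer square roots of \<open>10(n+3)(n+6)\<close> for \<open>n\<close> in \<open>ns\<close>.\<close>
  define roots :: "nat list" where "roots =
      [23, 26, 29, 32, 36, 39, 42, 45, 48, 51, 55, 58, 61, 64, 67, 70, 74, 77, 80, 83, 86, 93,
      96, 99, 102, 105, 108, 112, 115, 118, 121, 124, 127, 131, 134, 137, 140, 143, 146, 150,
      153, 156, 159, 162, 165, 169, 172, 175, 178, 181, 184, 188, 191, 194, 197, 200, 203, 207,
      210, 213, 216, 219, 222, 226, 229, 232, 235, 238, 241, 245, 248, 251, 254, 257, 260, 264,
      267, 270, 273, 276, 279, 282, 286, 289, 292]"
  have table: "list_all (\<lambda>(n, m). m ^ 2 < 10 * (n + 3) * (n + 6) \<and> 10 * (n + 3) * (n + 6) < (m + 1) ^ 2) (zip ns roots)"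
    by (simp add: ns_def roots_def upt_rec)
  have "length roots = length ns"
    by (simp add: ns_def roots_def)
  moreover have "n \<in> set ns"
    using assms \<open>n \<noteq> 24\<close> unfolding ns_def set_append set_upt by auto
  then obtain i where "i < length ns" "ns ! i = n"
    by (metis in_set_conv_nth)
  ultimately have "(n, roots ! i) \<in> set (zip ns roots)"
    by (auto simp: in_set_zip)
  then show False
    using table square not_square_between[of "roots ! i" "10 * (n + 3) * (n + 6)" k] by (auto simp: list_all_iff)
qed

lemma b6_integral_dimension:
  assumes "3 \<le> n" "n \<le> 88" "b6 n = real N"
  shows "n = 24"
  using b6_integral_imp_square[OF assms(1,3)] square_dimension_le_88[OF assms(1,2)] by blast

section \<open>Dimension 24\<close>

lemma Q6_cubic_argmin_24: "Q6_cubic_argmin 24 = 1 / 4"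
proof -
  have "sqrt (10 * (real 24 + 3) * (real 24 + 6)) = sqrt (90 ^ 2)"
    by simp
  then show ?thesis
    by (simp add: Q6_cubic_argmin_def)
qed

lemma b6_24: "b6 24 = 231"
  by (simp add: b6_eq Q6_cubic_argmin_24 Q6_cubic_def power2_eq_square power3_eq_cube)

lemma gram_kernel_nonzero:
  fixes f :: "'k::finite \<Rightarrow> nat \<Rightarrow> real"
  assumes "n < CARD('k)" "inj f" "\<And>i q. n \<le> q \<Longrightarrow> f i q = 0"
  obtains v :: "real ^ 'k" where "v \<noteq> 0" "\<And>i. (\<Sum>j\<in>UNIV. dot n (f i) (f j) * v $ j) = 0"
proof -
  have "real_fun.dependent (range f)"
  proof (rule ccontr)
    assume "real_fun.independent (range f)"
    then have "card (range f) \<le> card {..<n}"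
      using assms(3) by (intro card_independent_le_support) auto
    then show False
      using assms(1,2) by (simp add: card_image)
  qed
  then obtain u g where g: "g \<in> range f" "u g \<noteq> 0" and comb: "(\<Sum>g\<in>range f. (\<lambda>q. u g * g q)) = 0"
    using real_fun.dependent_finite[of "range f"] by auto
  define v :: "real ^ 'k" where "v = (\<chi> j. u (f j))"
  have "v \<noteq> 0"
    using g by (auto simp: v_def vec_eq_iff)
  moreover have "(\<Sum>j\<in>UNIV. dot n (f i) (f j) * v $ j) = 0" for i
  proof -
    have "(\<Sum>j\<in>UNIV. dot n (f i) (f j) * v $ j) = (\<Sum>g\<in>range f. u g * dot n (f i) g)"
      by (simp add: v_def sum.reindex[OF assms(2)] mult.commute)
    also have "\<dots> = (\<Sum>q<n. f i q * (\<Sum>g\<in>range f. (\<lambda>q. u g * g q)) q)"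
      unfolding dot_def sum_fun_apply by (simp add: sum_distrib_left sum.swap[of _ "range f"] algebra_simps)
    finally show ?thesis
      by (simp add: comb)
  qed
  ultimately show ?thesis
    using that by blast
qed

lemma det_eq_0_if_kernel:
  fixes A :: "real ^ 'n ^ 'n"
  assumes "A *v v = 0" "v \<noteq> 0"
  shows "det A = 0"
proof (rule ccontr)
  assume "det A \<noteq> 0"
  then obtain B where "B ** A = mat 1"
    by (auto simp: invertible_det_nz[symmetric] invertible_left_inverse)
  then have "v = B *v (A *v v)"
    by (simp add: matrix_vector_mul_assoc)
  then show False
    using assms by simp
qed

lemma of_int_det: "of_int (det (M :: int ^ 'n ^ 'n)) = det (\<chi> i j. (of_int (M $ i $ j) :: 'a::comm_ring_1))"
  unfolding det_def by (simp add: of_int_sum of_int_prod)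

definition ones_minus_id :: "bit ^ 26 ^ 26" where
  "ones_minus_id = (\<chi> i j. if i = j then 0 else 1)"

lemma ones_minus_id_square: "ones_minus_id ** ones_minus_id = mat 1"
proof -
  have "(ones_minus_id ** ones_minus_id) $ i $ j = (mat 1 :: bit ^ 26 ^ 26) $ i $ j" for i j
  proof -
    have "(ones_minus_id ** ones_minus_id) $ i $ j = (\<Sum>k\<in>UNIV. if k \<noteq> i \<and> k \<noteq> j then 1 else 0)"
      unfolding matrix_matrix_mult_def vec_lambda_beta by (intro sum.cong) (auto simp: ones_minus_id_def)
    also have "\<dots> = of_nat (card (UNIV - {i, j} :: 26 set))"
      by (simp add: sum.If_cases Diff_eq Int_def conj_commute)
    also have "card (UNIV - {i, j} :: 26 set) = (if i = j then 25 else 24)"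
      by (subst card_Diff_subset) auto
    finally show ?thesis
      by (simp add: mat_def)
  qed
  then show ?thesis
    by (simp add: vec_eq_iff)
qed

lemma det_ones_minus_id: "det ones_minus_id \<noteq> 0"
  using det_mul[of ones_minus_id ones_minus_id] by (auto simp: ones_minus_id_square)

text \<open>Twice the Gram matrix of 26 such vectors is an integer matrix congruent to \<open>J - I\<close> modulo 2,
  which is invertible over GF(2) because \<open>(J - I)\<^sup>2 = I\<close> there; but it is singular over the reals.\<close>
lemma no_large_equiangular_half_dim24:
  assumes fin: "finite Y" and "26 \<le> card Y"
    and supp: "\<And>x q. x \<in> Y \<Longrightarrow> 24 \<le> q \<Longrightarrow> x q = 0"
    and unit: "\<And>x. x \<in> Y \<Longrightarrow> dot 24 x x = 1"
    and equi: "\<And>x y. x \<in> Y \<Longrightarrow> y \<in> Y \<Longrightarrow> x \<noteq> y \<Longrightarrow> dot 24 x y ^ 2 = 1 / 4"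
  shows False
proof -
  obtain S where S: "S \<subseteq> Y" "card S = 26"
    using obtain_subset_with_card_n[OF assms(2)] by metis
  then have "finite S" "card (UNIV :: 26 set) = card S"
    using fin by (simp_all add: finite_subset)
  then obtain f where f: "bij_betw f (UNIV :: 26 set) S"
    using finite_same_card_bij[of "UNIV :: 26 set" S] by auto
  then have inj: "inj f" and fY: "f i \<in> Y" for i
    using S(1) by (auto simp: bij_betw_def)
  define M :: "int ^ 26 ^ 26" where
    "M = (\<chi> i j. if i = j then 2 else if 0 < dot 24 (f i) (f j) then 1 else -1)"
  have M: "of_int (M $ i $ j) = 2 * dot 24 (f i) (f j)" for i j
  proof (cases "i = j")
    case True
    then show ?thesis using unit fY by (simp add: M_def)
  next
    case False
    then have "(dot 24 (f i) (f j) - 1 / 2) * (dot 24 (f i) (f j) + 1 / 2) = 0"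
      using equi[OF fY fY] inj by (simp add: inj_eq algebra_simps power2_eq_square)
    then show ?thesis
      using False by (auto simp: M_def)
  qed
  obtain v where v: "v \<noteq> 0" "\<And>i. (\<Sum>j\<in>UNIV. dot 24 (f i) (f j) * v $ j) = 0"
    using gram_kernel_nonzero[of 24 f] inj supp fY by auto
  have "((\<chi> i j. (of_int (M $ i $ j) :: real)) *v v) $ i = 2 * (\<Sum>j\<in>UNIV. dot 24 (f i) (f j) * v $ j)" for i
    by (simp add: matrix_vector_mult_def M sum_distrib_left mult.assoc)
  then have "(\<chi> i j. (of_int (M $ i $ j) :: real)) *v v = 0"
    using v(2) by (simp add: vec_eq_iff)
  then have "det (\<chi> i j. (of_int (M $ i $ j) :: real)) = 0"
    using v(1) by (rule det_eq_0_if_kernel)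
  then have "det M = 0"
    using of_int_det[of M, where 'a = real] by simp
  moreover have "(\<chi> i j. (of_int (M $ i $ j) :: bit)) = ones_minus_id"
    by (simp add: vec_eq_iff M_def ones_minus_id_def)
  ultimately show False
    using of_int_det[of M, where 'a = bit] det_ones_minus_id by simp
qed

theorem mainTheorem2:
  fixes n :: nat
  assumes "n \<ge> 3"
  shows "\<not> (\<exists>Y. finite Y \<and> Y \<subseteq> sphere_pts n \<and> design_harmonic_index n 6 Y
              \<and> real (card Y) = b6 n)"
proof
  assume "\<exists>Y. finite Y \<and> Y \<subseteq> sphere_pts n \<and> design_harmonic_index n 6 Y \<and> real (card Y) = b6 n"
  then obtain Y where fin: "finite Y" and sphere: "Y \<subseteq> sphere_pts n"
    and design: "design_harmonic_index n 6 Y" and tight: "real (card Y) = b6 n"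
    by blast
  have unit: "\<And>x. x \<in> Y \<Longrightarrow> dot n x x = 1"
    using sphere sphere_pts_dot_self by blast
  have equi: "\<And>x y. x \<in> Y \<Longrightarrow> y \<in> Y \<Longrightarrow> x \<noteq> y \<Longrightarrow> dot n x y ^ 2 = Q6_cubic_argmin n"
    using tight_design_equiangular[OF assms design tight] by blast
  show False
  proof (cases "89 \<le> n")
    case True
    then have "card Y \<le> n * n"
      using equiangular_card_le_square[OF fin unit equi] Q6_cubic_argmin_bounds[OF assms] by simp
    then show False
      using b6_gt_square[OF True] tight by (simp add: power2_eq_square flip: of_nat_mult)
  next
    case False
    then have n: "n = 24"
      using b6_integral_dimension[OF assms _ tight[symmetric]] by simp
    show False
    proof (rule no_large_equiangular_half_dim24[OF fin])
      show "26 \<le> card Y"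
        using tight by (simp add: n b6_24)
      show "\<And>x q. x \<in> Y \<Longrightarrow> 24 \<le> q \<Longrightarrow> x q = 0"
        using sphere n by (auto simp: sphere_pts_def)
    qed (use unit equi in \<open>simp_all add: n Q6_cubic_argmin_24\<close>)
  qed
qed

end
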